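(* Let $\mathbf{x}=(x_n)$ be a summable sequence of positive reals whose cardinal function $f$ is bounded, and let $z,w>0$ be reals such that either (1) $z+w>\sum_{n=1}^\infty x_n$, or (2) $z=w=\frac12\sum_{n=1}^\infty x_n$. Let $h$ be the cardinal function of the sequence $(z,w,x_1,x_2,\dots)$. Then $\max h\le 3\max f$. In particular, if $\mathrm{rng}(f)=\{1,2\}$ then $\max h\le6$.
   Context: For a summable sequence $\mathbf{x}=(x_n)$ of positive reals, $\mathcal{A}(\mathbf{x})=\{\sum_{n\in A}x_n: A\subseteq\mathbb{N}\}$ is its achievement set and its cardinal function $f$ assigns to $x\in\mathcal{A}(\mathbf{x})$ the cardinality (a positive integer, $\omega$, or $\mathfrak{c}$) of $\{(\varepsilon_n)\in\{0,1\}^{\mathbb{N}}:\sum\varepsilon_nx_n=x\}$. The cardinal function is bounded if there is $N\in\mathbb{N}$ with $f(x)\le N$ for all $x$; then $\max f$ denotes its largest value. *)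

theory Defs
  imports Complex_Main
begin

text \<open>A subset A of the index set encodes the 0-1 sequence (its indicator).
  reps x s is the set of all such codes whose subsum equals s.\<close>
definition reps :: "(nat \<Rightarrow> real) \<Rightarrow> real \<Rightarrow> nat set set" where
  "reps x s = {A. (\<lambda>n. if n \<in> A then x n else 0) sums s}"

definition achievement_set :: "(nat \<Rightarrow> real) \<Rightarrow> real set" where
  "achievement_set x = {s. reps x s \<noteq> {}}"

definition bounded_cardfun :: "(nat \<Rightarrow> real) \<Rightarrow> bool" where
  "bounded_cardfun x \<longleftrightarrow> (\<exists>N::nat. \<forall>s \<in> achievement_set x. finite (reps x s) \<and> card (reps x s) \<le> N)"

text \<open>Range of the cardinal function (meaningful as nat values when it is bounded).\<close>
definition cardfun_range :: "(nat \<Rightarrow> real) \<Rightarrow> nat set" where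
  "cardfun_range x = (\<lambda>s. card (reps x s)) ` achievement_set x"

definition max_cardfun :: "(nat \<Rightarrow> real) \<Rightarrow> nat" where
  "max_cardfun x = Max (cardfun_range x)"

definition prepend2 :: "real \<Rightarrow> real \<Rightarrow> (nat \<Rightarrow> real) \<Rightarrow> nat \<Rightarrow> real" where
  "prepend2 z w x n = (if n = 0 then z else if n = 1 then w else x (n - 2))"

end

theory Submission
  imports Defs
begin

text \<open>Splitting a representation of s over (z, w, x_1, x_2, ...) according to whether it
  uses z and w gives h(s) \<le> f(s) + f(s - z) + f(s - w) + f(s - z - w). If z + w > \<Sum>x,
  one of s and s - z - w lies outside [0, \<Sum>x], so one of the four terms vanishes.
  If z = w = \<Sum>x/2, the only s where none need vanish is s = \<Sum>x, and there
  f(\<Sum>x) = f(0) = 1 while f(\<Sum>x/2) is 0 or at least 2, because complementation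
  is a fixed-point-free involution on the representations of \<Sum>x/2.
  In both cases the sum is at most 3 max f.\<close>

lemma empty_in_reps_0: "{} \<in> reps x 0"
  by (simp add: reps_def)

lemma reps_compl:
  assumes "summable x" and "A \<in> reps x t"
  shows "- A \<in> reps x (suminf x - t)"
proof -
  have "(\<lambda>n. x n - (if n \<in> A then x n else 0)) sums (suminf x - t)"
    using sums_diff[OF summable_sums[OF assms(1)]] assms(2) by (simp add: reps_def)
  moreover have "(\<lambda>n. x n - (if n \<in> A then x n else 0)) = (\<lambda>n. if n \<in> - A then x n else 0)"
    by auto
  ultimately show ?thesis
    by (simp add: reps_def)
qed

lemma card_reps_half_suminf_neq_1:
  assumes "summable x"
  shows "card (reps x (suminf x / 2)) \<noteq> 1"
proof
  assume "card (reps x (suminf x / 2)) = 1"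
  then obtain A where A: "reps x (suminf x / 2) = {A}"
    by (auto simp: card_Suc_eq)
  then have "- A \<in> reps x (suminf x / 2)"
    using reps_compl[OF assms, of A "suminf x / 2"] by simp
  with A show False
    by auto
qed

lemma reps_eq_empty_outside:
  assumes nonneg: "\<And>n. x n \<ge> 0" and "summable x" and "t < 0 \<or> t > suminf x"
  shows "reps x t = {}"
proof (rule equals0I)
  fix A assume "A \<in> reps x t"
  then have A: "(\<lambda>n. if n \<in> A then x n else 0) sums t"
    by (simp add: reps_def)
  have "0 \<le> t"
    by (rule sums_le[OF _ sums_zero A]) (simp add: nonneg)
  moreover have "t \<le> suminf x"
    by (rule sums_le[OF _ A summable_sums[OF \<open>summable x\<close>]]) (simp add: nonneg)
  ultimately show False
    using assms(3) by linarith
qed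

lemma reps_0_eq:
  assumes pos: "\<And>n. x n > 0"
  shows "reps x 0 = {{}}"
proof -
  have "A = {}" if "A \<in> reps x 0" for A
  proof -
    from that have "(\<lambda>n. if n \<in> A then x n else 0) sums 0"
      by (simp add: reps_def)
    then have "\<forall>n. (if n \<in> A then x n else 0) = 0"
      using pos by (subst suminf_eq_zero_iff[symmetric]) (auto simp: sums_iff less_imp_le)
    then show "A = {}"
      using pos by (metis equals0I less_irrefl)
  qed
  then show ?thesis
    using empty_in_reps_0 by blast
qed

lemma reps_suminf_eq:
  assumes "\<And>n. x n > 0" and "summable x"
  shows "reps x (suminf x) = {UNIV}"
proof -
  have "A = UNIV" if "A \<in> reps x (suminf x)" for A
    using reps_compl[OF \<open>summable x\<close> that] reps_0_eq[OF assms(1)] by auto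
  moreover have "UNIV \<in> reps x (suminf x)"
    using reps_compl[OF \<open>summable x\<close> empty_in_reps_0] by simp
  ultimately show ?thesis
    by blast
qed

lemma reps_case_nat_subset:
  "reps (case_nat a x) s
     \<subseteq> (\<lambda>A. Suc ` A) ` reps x s \<union> (\<lambda>A. insert 0 (Suc ` A)) ` reps x (s - a)"
proof
  fix B assume B: "B \<in> reps (case_nat a x) s"
  define A where "A = {n. Suc n \<in> B}"
  have "(\<lambda>n. if Suc n \<in> B then case_nat a x (Suc n) else 0) sums (s - (if 0 \<in> B then a else 0))"
    using B sums_Suc_iff[of "\<lambda>n. if n \<in> B then case_nat a x n else 0"
        "s - (if 0 \<in> B then a else 0)"]
    by (simp add: reps_def)
  then have A_reps: "A \<in> reps x (s - (if 0 \<in> B then a else 0))"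
    by (simp add: reps_def A_def cong: if_cong)
  have "B = (if 0 \<in> B then insert 0 (Suc ` A) else Suc ` A)"
    by (auto simp: A_def image_iff) (metis nat.exhaust)+
  with A_reps show "B \<in> (\<lambda>A. Suc ` A) ` reps x s \<union> (\<lambda>A. insert 0 (Suc ` A)) ` reps x (s - a)"
    by (cases "0 \<in> B") auto
qed

lemma
  assumes "\<And>t. finite (reps x t)"
  shows finite_reps_case_nat: "finite (reps (case_nat a x) s)"
    and card_reps_case_nat_le: "card (reps (case_nat a x) s) \<le> card (reps x s) + card (reps x (s - a))"
proof -
  let ?U = "(\<lambda>A. Suc ` A) ` reps x s \<union> (\<lambda>A. insert 0 (Suc ` A)) ` reps x (s - a)"
  have U_fin: "finite ?U"
    using assms by blast
  then show "finite (reps (case_nat a x) s)"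
    by (rule finite_subset[OF reps_case_nat_subset])
  have "card (reps (case_nat a x) s) \<le> card ?U"
    by (rule card_mono[OF U_fin reps_case_nat_subset])
  also have "\<dots> \<le> card ((\<lambda>A. Suc ` A) ` reps x s) + card ((\<lambda>A. insert 0 (Suc ` A)) ` reps x (s - a))"
    by (rule card_Un_le)
  also have "\<dots> \<le> card (reps x s) + card (reps x (s - a))"
    by (intro add_mono card_image_le assms)
  finally show "card (reps (case_nat a x) s) \<le> card (reps x s) + card (reps x (s - a))" .
qed

lemma prepend2_eq_case_nat: "prepend2 z w x = case_nat z (case_nat w x)"
  by (auto simp: prepend2_def fun_eq_iff split: nat.split)

lemma
  assumes "\<And>t. finite (reps x t)"
  shows finite_reps_prepend2: "finite (reps (prepend2 z w x) s)"
    and card_reps_prepend2_le: "card (reps (prepend2 z w x) s)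
      \<le> card (reps x s) + card (reps x (s - z)) + card (reps x (s - w)) + card (reps x (s - z - w))"
proof -
  have fin: "finite (reps (case_nat w x) t)" for t
    by (rule finite_reps_case_nat[OF assms])
  show "finite (reps (prepend2 z w x) s)"
    unfolding prepend2_eq_case_nat by (rule finite_reps_case_nat[OF fin])
  show "card (reps (prepend2 z w x) s)
      \<le> card (reps x s) + card (reps x (s - z)) + card (reps x (s - w)) + card (reps x (s - z - w))"
    unfolding prepend2_eq_case_nat
    using card_reps_case_nat_le[OF fin, of z s] card_reps_case_nat_le[OF assms, of w s]
      card_reps_case_nat_le[OF assms, of w "s - z"]
    by (simp add: algebra_simps)
qed

lemma bounded_cardfun_finite_reps:
  assumes "bounded_cardfun x"
  shows "finite (reps x t)"
proof (cases "t \<in> achievement_set x")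
  case True
  with assms show ?thesis
    unfolding bounded_cardfun_def by blast
next
  case False
  then show ?thesis
    by (simp add: achievement_set_def)
qed

lemma card_reps_le_max_cardfun:
  assumes "bounded_cardfun x"
  shows "card (reps x t) \<le> max_cardfun x"
proof (cases "t \<in> achievement_set x")
  case True
  obtain N where "\<forall>s \<in> achievement_set x. card (reps x s) \<le> N"
    using assms unfolding bounded_cardfun_def by blast
  then have "cardfun_range x \<subseteq> {..N}"
    unfolding cardfun_range_def by blast
  then have "finite (cardfun_range x)"
    using finite_subset by blast
  moreover have "card (reps x t) \<in> cardfun_range x"
    using True unfolding cardfun_range_def by (rule imageI)
  ultimately show ?thesis
    unfolding max_cardfun_def by (rule Max_ge)
next
  case False
  then show ?thesis
    by (simp add: achievement_set_def)
qed

lemma bounded_cardfun_max_cardfun_le: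
  assumes fin: "\<And>t. finite (reps x t)" and le: "\<And>t. card (reps x t) \<le> K"
  shows "bounded_cardfun x \<and> max_cardfun x \<le> K"
proof
  show "bounded_cardfun x"
    unfolding bounded_cardfun_def using fin le by blast
  have "0 \<in> achievement_set x"
    using empty_in_reps_0 by (auto simp: achievement_set_def)
  then have "cardfun_range x \<noteq> {}"
    by (auto simp: cardfun_range_def)
  moreover have range_le: "cardfun_range x \<subseteq> {..K}"
    unfolding cardfun_range_def using le by blast
  moreover from range_le have "finite (cardfun_range x)"
    using finite_subset by blast
  ultimately show "max_cardfun x \<le> K"
    unfolding max_cardfun_def by (simp add: subset_eq)
qed

lemma card_reps_prepend2_le_3_max_cardfun:
  assumes pos: "\<And>n. x n > 0" and summ: "summable x" and bdd: "bounded_cardfun x"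
    and cases: "z + w > suminf x \<or> (z = suminf x / 2 \<and> w = suminf x / 2)"
  shows "card (reps (prepend2 z w x) s) \<le> 3 * max_cardfun x"
proof -
  define S where "S = suminf x"
  define M where "M = max_cardfun x"
  define f where "f t = card (reps x t)" for t
  have f_le: "f t \<le> M" for t
    using card_reps_le_max_cardfun[OF bdd] by (simp add: f_def M_def)
  have f_out: "f t = 0" if "t < 0 \<or> t > S" for t
    using reps_eq_empty_outside[of x t] pos summ that by (simp add: f_def S_def less_imp_le)
  have f_0: "f 0 = 1" and f_S: "f S = 1"
    using reps_0_eq[OF pos] reps_suminf_eq[OF pos summ] by (simp_all add: f_def S_def)
  have "card (reps (prepend2 z w x) s) \<le> f s + f (s - z) + f (s - w) + f (s - z - w)"
    unfolding f_def by (rule card_reps_prepend2_le[OF bounded_cardfun_finite_reps[OF bdd]])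
  also have "\<dots> \<le> 3 * M"
  proof (cases "s = S \<and> z + w = S")
    case True
    with cases have "s = S" "s - z = S / 2" "s - w = S / 2" "s - z - w = 0"
      by (auto simp: S_def)
    then have "f s + f (s - z) + f (s - w) + f (s - z - w) = 2 + 2 * f (S / 2)"
      by (simp only: f_0 f_S)
    moreover have "f (S / 2) \<noteq> 1"
      using card_reps_half_suminf_neq_1[OF summ] by (simp add: f_def S_def)
    ultimately show ?thesis
      using f_le[of 0] f_le[of "S / 2"] f_0 by (cases "f (S / 2) = 0") simp_all
  next
    case False
    with cases have "s > S \<or> s - z - w < 0"
      by (auto simp: S_def)
    then have "f s = 0 \<or> f (s - z - w) = 0"
      using f_out[of s] f_out[of "s - z - w"] by argo
    then show ?thesis
      using f_le[of s] f_le[of "s - z"] f_le[of "s - w"] f_le[of "s - z - w"] by linarith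
  qed
  finally show ?thesis
    unfolding M_def .
qed

theorem lemma7p1:
  fixes x :: "nat \<Rightarrow> real" and z w :: real
  assumes pos: "\<And>n. x n > 0"
    and summ: "summable x"
    and bdd: "bounded_cardfun x"
    and zpos: "z > 0" and wpos: "w > 0"
    and cases: "z + w > suminf x \<or> (z = suminf x / 2 \<and> w = suminf x / 2)"
  shows "bounded_cardfun (prepend2 z w x)
    \<and> max_cardfun (prepend2 z w x) \<le> 3 * max_cardfun x
    \<and> (cardfun_range x = {1, 2} \<longrightarrow> max_cardfun (prepend2 z w x) \<le> 6)"
proof -
  have "bounded_cardfun (prepend2 z w x) \<and> max_cardfun (prepend2 z w x) \<le> 3 * max_cardfun x"
    using finite_reps_prepend2[OF bounded_cardfun_finite_reps[OF bdd]]
      card_reps_prepend2_le_3_max_cardfun[OF pos summ bdd cases]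
    by (rule bounded_cardfun_max_cardfun_le)
  moreover have "cardfun_range x = {1, 2} \<Longrightarrow> max_cardfun x = 2"
    by (simp add: max_cardfun_def)
  ultimately show ?thesis
    by auto
qed

end
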